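(* Let $\mathcal B=(B_1,\dots,B_d)$ be a splitting of order $d$ of $B_J\in\mathbb R^{n\times n}$, let $\lambda\ne0$ be an eigenvalue of $T(\mathcal B)$ and let $[\alpha_1^T,\dots,\alpha_d^T]^T$ (with $\alpha_p\in\mathbb C^n$) be an associated eigenvector. Then $\alpha_p\ne0$ for every $p=1,\dots,d$.
   Context: For $B\in\mathbb R^{n\times n}$, a splitting of $B$ of order $d\ge1$ is an ordered $d$-tuple $\mathcal B=(B_1,\dots,B_d)$ of real $n\times n$ matrices with $B_p\neq O$ for all $p$, $\sum_{p=1}^d B_p=B$, and $B_p\circ B_q=O$ (Hadamard product) for $p\ne q$. The iteration matrix of $\mathcal B$ is the $dn\times dn$ matrix $T(\mathcal B)=(I_{dn}-\mathcal L)^{-1}\mathcal U$, where $\mathcal L,\mathcal U$ are $d\times d$ block matrices with $n\times n$ blocks, $\mathcal L_{ij}=B_j$ if $i>j$ and $O$ otherwise, $\mathcal U_{ij}=B_j$ if $i\le j$ and $O$ otherwise. *)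

theory Defs
  imports "Jordan_Normal_Form.Char_Poly" "Jordan_Normal_Form.Gauss_Jordan_Elimination"
begin

text \<open>A splitting of order d of an n x n real matrix B: d nonzero n x n matrices
  Bs 0, ..., Bs (d-1) (0-based indexing) summing to B, with pairwise zero Hadamard products.\<close>
definition is_splitting :: "nat \<Rightarrow> real mat \<Rightarrow> nat \<Rightarrow> (nat \<Rightarrow> real mat) \<Rightarrow> bool" where
  "is_splitting n B d Bs \<longleftrightarrow>
     d \<ge> 1 \<and> B \<in> carrier_mat n n \<and>
     (\<forall>p<d. Bs p \<in> carrier_mat n n \<and> Bs p \<noteq> 0\<^sub>m n n) \<and>
     (\<forall>i<n. \<forall>j<n. B $$ (i,j) = (\<Sum>p<d. Bs p $$ (i,j))) \<and>
     (\<forall>p<d. \<forall>q<d. p \<noteq> q \<longrightarrow> (\<forall>i<n. \<forall>j<n. Bs p $$ (i,j) * Bs q $$ (i,j) = 0))"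

text \<open>Block matrices: block (I,J) (0-based) occupies rows I*n..I*n+n-1, columns J*n..J*n+n-1.\<close>
definition split_L :: "nat \<Rightarrow> nat \<Rightarrow> (nat \<Rightarrow> real mat) \<Rightarrow> real mat" where
  "split_L n d Bs = mat (d*n) (d*n)
     (\<lambda>(i,j). if i div n > j div n then Bs (j div n) $$ (i mod n, j mod n) else 0)"

definition split_U :: "nat \<Rightarrow> nat \<Rightarrow> (nat \<Rightarrow> real mat) \<Rightarrow> real mat" where
  "split_U n d Bs = mat (d*n) (d*n)
     (\<lambda>(i,j). if i div n \<le> j div n then Bs (j div n) $$ (i mod n, j mod n) else 0)"

text \<open>Iteration matrix T = (I - L)^{-1} U (I - L is unit lower triangular, hence invertible).\<close>
definition iteration_matrix :: "nat \<Rightarrow> nat \<Rightarrow> (nat \<Rightarrow> real mat) \<Rightarrow> real mat" where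
  "iteration_matrix n d Bs =
     the (mat_inverse (1\<^sub>m (d*n) - split_L n d Bs)) * split_U n d Bs"

definition block_vec :: "nat \<Rightarrow> complex vec \<Rightarrow> nat \<Rightarrow> complex vec" where
  "block_vec n v p = vec n (\<lambda>i. v $ (p*n + i))"

end

theory Submission imports Defs begin

(* Write c_q = B_q alpha_q. Since I - L is unit lower triangular, T alpha = lambda alpha is
   equivalent to U alpha = lambda (alpha - L alpha), whose p-th block reads
     sum_{q >= p} c_q = lambda (alpha_p - sum_{q < p} c_q).
   Subtracting the equations for p and p + 1 gives lambda (alpha_p - alpha_{p+1}) = (1 - lambda) c_p,
   so, as lambda <> 0, a zero block forces the next one to vanish. Once the last block vanishes,
   its equation gives sum_q c_q = 0, and then the first equation gives lambda alpha_1 = 0;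
   propagating from the first block, all blocks vanish, contradicting alpha <> 0. *)

lemma sum_lessThan_mult_blocks:
  fixes n :: nat
  shows "(\<Sum>k<d*n. f k) = (\<Sum>q<d. \<Sum>r<n. f (q*n + r))"
proof -
  have "(\<Sum>k<d*n. f k) = (\<Sum>q<d. \<Sum>k\<in>{q*n..<q*n + n}. f k)"
    by (rule sum.nat_group[symmetric])
  also have "\<dots> = (\<Sum>q<d. \<Sum>r<n. f (q*n + r))"
  proof (rule sum.cong[OF refl])
    fix q
    show "(\<Sum>k\<in>{q*n..<q*n + n}. f k) = (\<Sum>r<n. f (q*n + r))"
      using sum.shift_bounds_nat_ivl[of f 0 "q*n" n] by (simp add: atLeast0LessThan add.commute)
  qed
  finally show ?thesis .
qed

lemma block_index_less:
  assumes "p < d" and "i < n"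
  shows "p*n + i < d*(n::nat)"
proof -
  have "p*n + i < Suc p * n" using assms(2) by simp
  also have "\<dots> \<le> d*n" using assms(1) by (intro mult_le_mono1) simp
  finally show ?thesis .
qed

lemma mult_mat_vec_by_blocks:
  fixes M :: "'a::comm_semiring_0 mat"
  assumes "M \<in> carrier_mat m (d*n)" and "v \<in> carrier_vec (d*n)" and "j < m"
  shows "(M *\<^sub>v v) $ j = (\<Sum>q<d. \<Sum>r<n. M $$ (j, q*n + r) * v $ (q*n + r))"
proof -
  have "(M *\<^sub>v v) $ j = (\<Sum>k<d*n. M $$ (j, k) * v $ k)"
    using assms by (simp add: scalar_prod_def lessThan_atLeast0)
  then show ?thesis by (simp add: sum_lessThan_mult_blocks)
qed

lemma split_L_block_entry:
  assumes "p < d" "q < d" "i < n" "r < n"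
  shows "split_L n d Bs $$ (p*n + i, q*n + r) = (if q < p then Bs q $$ (i, r) else 0)"
  using assms block_index_less[of p d i n] block_index_less[of q d r n] by (simp add: split_L_def)

lemma split_U_block_entry:
  assumes "p < d" "q < d" "i < n" "r < n"
  shows "split_U n d Bs $$ (p*n + i, q*n + r) = (if p \<le> q then Bs q $$ (i, r) else 0)"
  using assms block_index_less[of p d i n] block_index_less[of q d r n] by (simp add: split_U_def)

lemma split_L_carrier: "split_L n d Bs \<in> carrier_mat (d*n) (d*n)"
  by (simp add: split_L_def)

lemma split_U_carrier: "split_U n d Bs \<in> carrier_mat (d*n) (d*n)"
  by (simp add: split_U_def)

lemma one_minus_split_L_carrier: "1\<^sub>m (d*n) - split_L n d Bs \<in> carrier_mat (d*n) (d*n)"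
  by (simp add: split_L_carrier minus_carrier_mat)

lemma det_one_minus_split_L: "det (1\<^sub>m (d*n) - split_L n d Bs) = 1"
proof -
  let ?M = "1\<^sub>m (d*n) - split_L n d Bs"
  have "det ?M = prod_list (diag_mat ?M)"
    by (rule det_lower_triangular[OF _ one_minus_split_L_carrier])
      (auto simp: split_L_def, meson div_le_mono less_imp_le not_le)
  also have "\<dots> = 1"
    unfolding prod_list_diag_prod by (rule prod.neutral) (auto simp: split_L_def)
  finally show ?thesis .
qed

lemma one_minus_split_L_mult_iteration_matrix:
  "(1\<^sub>m (d*n) - split_L n d Bs) * iteration_matrix n d Bs = split_U n d Bs"
  and iteration_matrix_carrier: "iteration_matrix n d Bs \<in> carrier_mat (d*n) (d*n)"
proof -
  let ?M = "1\<^sub>m (d*n) - split_L n d Bs"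
  have M: "?M \<in> carrier_mat (d*n) (d*n)" by (rule one_minus_split_L_carrier)
  have "?M \<in> Units (ring_mat TYPE(real) (d*n) (undefined::unit))"
    using det_non_zero_imp_unit[OF M] by (simp add: det_one_minus_split_L)
  then obtain Mi where Mi: "mat_inverse ?M = Some Mi"
    using mat_inverse(1)[OF M] by fastforce
  with mat_inverse(2)[OF M] have MMi: "?M * Mi = 1\<^sub>m (d*n)" and Mi_carrier: "Mi \<in> carrier_mat (d*n) (d*n)"
    by auto
  have U: "split_U n d Bs \<in> carrier_mat (d*n) (d*n)" by (rule split_U_carrier)
  have T: "iteration_matrix n d Bs = Mi * split_U n d Bs"
    by (simp add: iteration_matrix_def Mi)
  show "iteration_matrix n d Bs \<in> carrier_mat (d*n) (d*n)"
    using Mi_carrier U by (simp add: T)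
  have "?M * (Mi * split_U n d Bs) = (?M * Mi) * split_U n d Bs"
    using M Mi_carrier U by (simp add: assoc_mult_mat)
  then show "?M * iteration_matrix n d Bs = split_U n d Bs"
    using U by (simp add: T MMi)
qed

lemma iteration_matrix_eigenvector_equation:
  assumes "eigenvector (map_mat complex_of_real (iteration_matrix n d Bs)) v lam"
  shows "map_mat complex_of_real (split_U n d Bs) *\<^sub>v v
      = lam \<cdot>\<^sub>v (v - map_mat complex_of_real (split_L n d Bs) *\<^sub>v v)"
proof -
  let ?h = "map_mat complex_of_real"
  let ?M = "1\<^sub>m (d*n) - split_L n d Bs" and ?T = "iteration_matrix n d Bs"
  have M: "?M \<in> carrier_mat (d*n) (d*n)" by (rule one_minus_split_L_carrier)
  have T: "?T \<in> carrier_mat (d*n) (d*n)" by (rule iteration_matrix_carrier)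
  have L: "split_L n d Bs \<in> carrier_mat (d*n) (d*n)" by (rule split_L_carrier)
  from assms T have v: "v \<in> carrier_vec (d*n)" and Tv: "?h ?T *\<^sub>v v = lam \<cdot>\<^sub>v v"
    by (auto simp: eigenvector_def)
  have "?h (split_U n d Bs) = ?h ?M * ?h ?T"
    using of_real_hom.mat_hom_mult[OF M T] by (simp add: one_minus_split_L_mult_iteration_matrix)
  then have "?h (split_U n d Bs) *\<^sub>v v = ?h ?M *\<^sub>v (?h ?T *\<^sub>v v)"
    using M T v by (simp add: assoc_mult_mat_vec)
  also have "\<dots> = lam \<cdot>\<^sub>v (?h ?M *\<^sub>v v)"
    using M v by (simp add: Tv mult_mat_vec)
  also have "?h ?M = 1\<^sub>m (d*n) - ?h (split_L n d Bs)"
    by (rule eq_matI) (auto simp: split_L_def)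
  also have "(1\<^sub>m (d*n) - ?h (split_L n d Bs)) *\<^sub>v v = v - ?h (split_L n d Bs) *\<^sub>v v"
    using L v by (subst minus_mult_distrib_mat_vec) auto
  finally show ?thesis .
qed

lemma block_vec_carrier [simp]: "block_vec n v p \<in> carrier_vec n"
  by (simp add: block_vec_def)

lemma block_row_mult_vec:
  fixes M :: "real mat" and Bs :: "nat \<Rightarrow> real mat" and Q :: "nat set"
  assumes M: "M \<in> carrier_mat (d*n) (d*n)" and v: "v \<in> carrier_vec (d*n)"
    and p: "p < d" and i: "i < n" and Q: "Q \<subseteq> {..<d}"
    and Bs: "\<And>q. q \<in> Q \<Longrightarrow> Bs q \<in> carrier_mat n n"
    and blocks: "\<And>q r. q < d \<Longrightarrow> r < n \<Longrightarrow> M $$ (p*n + i, q*n + r) = (if q \<in> Q then Bs q $$ (i, r) else 0)"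
  shows "(map_mat complex_of_real M *\<^sub>v v) $ (p*n + i)
      = (\<Sum>q\<in>Q. (map_mat complex_of_real (Bs q) *\<^sub>v block_vec n v q) $ i)"
proof -
  let ?c = "\<lambda>q. (\<Sum>r<n. complex_of_real (Bs q $$ (i, r)) * v $ (q*n + r))"
  have "(map_mat complex_of_real M *\<^sub>v v) $ (p*n + i)
      = (\<Sum>q<d. \<Sum>r<n. map_mat complex_of_real M $$ (p*n + i, q*n + r) * v $ (q*n + r))"
    using M v block_index_less[OF p i] by (intro mult_mat_vec_by_blocks) auto
  also have "\<dots> = (\<Sum>q<d. if q \<in> Q then ?c q else 0)"
    using M p i by (intro sum.cong refl) (auto simp: blocks block_index_less)
  also have "\<dots> = (\<Sum>q\<in>Q. ?c q)"
    using Q by (simp add: sum.If_cases Int_absorb1)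
  also have "\<dots> = (\<Sum>q\<in>Q. (map_mat complex_of_real (Bs q) *\<^sub>v block_vec n v q) $ i)"
  proof (rule sum.cong[OF refl])
    fix q assume "q \<in> Q"
    with Bs have "Bs q \<in> carrier_mat n n" by simp
    with i show "?c q = (map_mat complex_of_real (Bs q) *\<^sub>v block_vec n v q) $ i"
      by (simp add: block_vec_def scalar_prod_def lessThan_atLeast0 mult.commute)
  qed
  finally show ?thesis .
qed

lemma iteration_matrix_eigenvector_block_equation:
  assumes ev: "eigenvector (map_mat complex_of_real (iteration_matrix n d Bs)) v lam"
    and Bs: "\<And>q. q < d \<Longrightarrow> Bs q \<in> carrier_mat n n"
    and p: "p < d" and i: "i < n"
  shows "(\<Sum>q\<in>{p..<d}. (map_mat complex_of_real (Bs q) *\<^sub>v block_vec n v q) $ i)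
      = lam * (block_vec n v p $ i - (\<Sum>q<p. (map_mat complex_of_real (Bs q) *\<^sub>v block_vec n v q) $ i))"
proof -
  have v: "v \<in> carrier_vec (d*n)"
    using ev iteration_matrix_carrier[of n d Bs] by (auto simp: eigenvector_def carrier_matD)
  have j: "p*n + i < d*n" using p i by (rule block_index_less)
  have U: "(map_mat complex_of_real (split_U n d Bs) *\<^sub>v v) $ (p*n + i)
      = (\<Sum>q\<in>{p..<d}. (map_mat complex_of_real (Bs q) *\<^sub>v block_vec n v q) $ i)"
    by (rule block_row_mult_vec[OF split_U_carrier v p i]) (auto simp: Bs p i split_U_block_entry)
  have L: "(map_mat complex_of_real (split_L n d Bs) *\<^sub>v v) $ (p*n + i)
      = (\<Sum>q<p. (map_mat complex_of_real (Bs q) *\<^sub>v block_vec n v q) $ i)"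
    by (rule block_row_mult_vec[OF split_L_carrier v p i]) (use p in \<open>auto simp: Bs i split_L_block_entry\<close>)
  show ?thesis
    using arg_cong[OF iteration_matrix_eigenvector_equation[OF ev], of "\<lambda>w. w $ (p*n + i)"]
    using v j i split_L_carrier[of n d Bs] by (simp add: U L block_vec_def)
qed

context
  fixes lam :: "'a::field" and x c :: "nat \<Rightarrow> 'a vec" and d n :: nat
  assumes lam: "lam \<noteq> 0"
    and x_carrier: "\<And>q. q < d \<Longrightarrow> x q \<in> carrier_vec n"
    and c_zero: "\<And>q. q < d \<Longrightarrow> x q = 0\<^sub>v n \<Longrightarrow> c q = 0\<^sub>v n"
    and recurrence: "\<And>p i. p < d \<Longrightarrow> i < n \<Longrightarrow>
      (\<Sum>q\<in>{p..<d}. c q $ i) = lam * (x p $ i - (\<Sum>q<p. c q $ i))"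
begin

lemma zero_block_imp_next_zero:
  assumes "Suc p < d" and "x p = 0\<^sub>v n"
  shows "x (Suc p) = 0\<^sub>v n"
proof (rule eq_vecI)
  fix i assume "i < dim_vec (0\<^sub>v n :: 'a vec)"
  then have i: "i < n" by simp
  have cp: "c p $ i = 0" using c_zero[of p] assms i by simp
  have "(\<Sum>q\<in>{p..<d}. c q $ i) = c p $ i + (\<Sum>q\<in>{Suc p..<d}. c q $ i)"
    using assms(1) by (simp add: sum.atLeast_Suc_lessThan)
  moreover have "(\<Sum>q<Suc p. c q $ i) = (\<Sum>q<p. c q $ i) + c p $ i" by simp
  ultimately have "lam * x (Suc p) $ i = 0"
    using recurrence[of p i] recurrence[of "Suc p" i] assms i cp by (simp add: algebra_simps)
  with lam show "x (Suc p) $ i = 0\<^sub>v n $ i" using i by simp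
qed (use x_carrier assms(1) in simp)

lemma zero_block_imp_later_zero:
  assumes "x p = 0\<^sub>v n" and "p \<le> q" and "q < d"
  shows "x q = 0\<^sub>v n"
  using assms(2,3)
proof (induction q rule: dec_induct)
  case (step q)
  then show ?case using zero_block_imp_next_zero by simp
qed (use assms(1) in simp)

lemma zero_last_block_imp_first_zero:
  assumes "0 < d" and "x (d - 1) = 0\<^sub>v n"
  shows "x 0 = 0\<^sub>v n"
proof (rule eq_vecI)
  obtain m where d: "d = Suc m" using assms(1) gr0_implies_Suc by blast
  fix i assume "i < dim_vec (0\<^sub>v n :: 'a vec)"
  then have i: "i < n" by simp
  have last: "c m $ i = 0" using c_zero[of m] assms(2) i d by simp
  have "lam * (\<Sum>q<m. c q $ i) = 0"
    using recurrence[of m i] assms(2) i last d by (simp add: algebra_simps)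
  with lam last have "(\<Sum>q<d. c q $ i) = 0" by (simp add: d)
  then have "lam * x 0 $ i = 0"
    using recurrence[of 0 i] assms(1) i by (simp add: atLeast0LessThan)
  with lam show "x 0 $ i = 0\<^sub>v n $ i" using i by simp
qed (use x_carrier assms(1) in simp)

lemma zero_block_imp_all_zero:
  assumes "p < d" and "x p = 0\<^sub>v n" and "q < d"
  shows "x q = 0\<^sub>v n"
proof -
  have "x (d - 1) = 0\<^sub>v n"
    using assms(2) by (rule zero_block_imp_later_zero) (use assms(1) in auto)
  then have "x 0 = 0\<^sub>v n"
    using assms(1) by (intro zero_last_block_imp_first_zero) auto
  then show ?thesis
    by (rule zero_block_imp_later_zero) (use assms(3) in auto)
qed

end

lemma vec_eq_zero_if_blocks_zero:
  assumes v: "v \<in> carrier_vec (d*n)" and blocks: "\<And>p. p < d \<Longrightarrow> block_vec n v p = 0\<^sub>v n"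
  shows "v = 0\<^sub>v (d*n)"
proof (rule eq_vecI)
  fix j assume "j < dim_vec (0\<^sub>v (d*n) :: complex vec)"
  then have j: "j < d*n" by simp
  then have q: "j div n < d" and r: "j mod n < n"
    by (simp_all add: less_mult_imp_div_less) (cases "n = 0", auto)
  have "v $ j = block_vec n v (j div n) $ (j mod n)"
    using r by (simp add: block_vec_def)
  also have "\<dots> = 0"
    using blocks[OF q] r by simp
  finally show "v $ j = 0\<^sub>v (d*n) $ j"
    using j by simp
qed (use v in simp)

theorem proposition2p2:
  fixes n d :: nat and B :: "real mat" and Bs :: "nat \<Rightarrow> real mat"
    and lam :: complex and v :: "complex vec"
  assumes "is_splitting n B d Bs"
    and "lam \<noteq> 0"
    and "eigenvector (map_mat complex_of_real (iteration_matrix n d Bs)) v lam"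
  shows "\<forall>p<d. block_vec n v p \<noteq> 0\<^sub>v n"
proof (intro allI impI notI)
  fix p assume p: "p < d" and zero_block: "block_vec n v p = 0\<^sub>v n"
  have Bs: "\<And>q. q < d \<Longrightarrow> Bs q \<in> carrier_mat n n"
    using assms(1) by (simp add: is_splitting_def)
  have v: "v \<in> carrier_vec (d*n)" and v_nonzero: "v \<noteq> 0\<^sub>v (d*n)"
    using assms(3) iteration_matrix_carrier[of n d Bs] by (auto simp: eigenvector_def carrier_matD)
  let ?c = "\<lambda>q. map_mat complex_of_real (Bs q) *\<^sub>v block_vec n v q"
  have x_carrier: "block_vec n v q \<in> carrier_vec n" if "q < d" for q
    by simp
  have c_zero: "?c q = 0\<^sub>v n" if "q < d" and "block_vec n v q = 0\<^sub>v n" for q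
    using Bs[OF that(1)] that(2) by (intro eq_vecI) auto
  have "block_vec n v q = 0\<^sub>v n" if "q < d" for q
    using zero_block_imp_all_zero[where x = "block_vec n v" and c = ?c, OF assms(2) x_carrier c_zero
        iteration_matrix_eigenvector_block_equation[OF assms(3) Bs] p zero_block that] .
  with v have "v = 0\<^sub>v (d*n)" by (rule vec_eq_zero_if_blocks_zero)
  with v_nonzero show False ..
qed

end
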